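(* Consider the stochastic energy exchange model and the notation of the context. For every sufficiently small $\eta>0$ there is a constant $C>0$ depending on $N$ and $\eta$ such that for every $\mathbf{E}\in\mathbb{R}^N_+$, $1\le n\le N$ and $1\le k\le N-n+1$, $$\mathbb{E}_{\mathbf{E}}\big[V_{n,k}(\mathbf{E}_{\tau_1^+})\mathbf{1}_{\mathcal{C}_k(\tau_1)}\big]\le\frac{C}{\mathcal{R}}\Big(\sum_{i=0}^{n-1}E_{k+i}\Big)^{a_n\eta-\frac12}$$ and $$\mathbb{E}_{\mathbf{E}}\big[V_{n,k}(\mathbf{E}_{\tau_1^+})\mathbf{1}_{\mathcal{C}_{k+n}(\tau_1)}\big]\le\frac{C}{\mathcal{R}}\Big(\sum_{i=0}^{n-1}E_{k+i}\Big)^{a_n\eta-\frac12}.$$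
   Context: Fix $N\ge1$, $T_L,T_R>0$, a sufficiently large $K$ ($K\gg T_L,T_R$) and $R(a,b)=\min\{K,\sqrt{\min(a,b)}\}$. Write $E_0:=T_L$, $E_{N+1}:=T_R$. The stochastic energy exchange model is the Markov jump process $\mathbf{E}_t=(E_1(t),\dots,E_N(t))$ on $\mathbb{R}^N_+$ with independent exponential clocks $i=1,\dots,N+1$, clock $i$ having rate $R_i=R(E_{i-1},E_i)$. When clock $i$ with $2\le i\le N$ rings, $(E_{i-1},E_i)\mapsto(p(E_{i-1}+E_i),(1-p)(E_{i-1}+E_i))$, $p$ uniform on $(0,1)$; when clock $1$ (resp. $N+1$) rings, $E_1\mapsto p(E_1+X_L)$ (resp. $E_N\mapsto p(E_N+X_R)$), $X_L,X_R$ exponential with means $T_L,T_R$; all randomness independent. Let $\tau_1$ be the time of the first clock ring, $\mathcal{C}_i(\tau_1)$ the event that the ring at $\tau_1$ is clock $i$, $\mathbf{E}_{\tau_1^+}$ the configuration immediately after that ring, $\mathcal{R}=\sum_{i=1}^{N+1}R_i$, and $\mathbb{E}_{\mathbf{E}}$ expectation with $\mathbf{E}_0=\mathbf{E}$. Let $a_m=1-\frac{2^{m-1}-1}{2^N-1}$ and $V_{n,k}(\mathbf{E})=\big(\sum_{j=0}^{n-1}E_{k+j}\big)^{a_n\eta-1}$. *)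

theory Defs
  imports "HOL-Probability.Probability"
begin

text \<open>Configurations are functions nat => real; only indices 1..N are meaningful.
  The boundary values E_0 = TL and E_(N+1) = TR are supplied by ext_cfg.\<close>

definition ext_cfg :: "real \<Rightarrow> real \<Rightarrow> nat \<Rightarrow> (nat \<Rightarrow> real) \<Rightarrow> nat \<Rightarrow> real" where
  "ext_cfg TL TR N E i = (if i = 0 then TL else if i = N + 1 then TR else E i)"

definition rate_fun :: "real \<Rightarrow> real \<Rightarrow> real \<Rightarrow> real" where
  "rate_fun K a b = min K (sqrt (min a b))"

definition clock_rate :: "real \<Rightarrow> real \<Rightarrow> real \<Rightarrow> nat \<Rightarrow> (nat \<Rightarrow> real) \<Rightarrow> nat \<Rightarrow> real" where
  "clock_rate K TL TR N E i = rate_fun K (ext_cfg TL TR N E (i - 1)) (ext_cfg TL TR N E i)"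

definition total_rate :: "real \<Rightarrow> real \<Rightarrow> real \<Rightarrow> nat \<Rightarrow> (nat \<Rightarrow> real) \<Rightarrow> real" where
  "total_rate K TL TR N E = (\<Sum>i = 1..N + 1. clock_rate K TL TR N E i)"

definition jump :: "nat \<Rightarrow> (nat \<Rightarrow> real) \<Rightarrow> nat \<Rightarrow> real \<Rightarrow> real \<Rightarrow> real \<Rightarrow> nat \<Rightarrow> real" where
  "jump N E i p xL xR =
     (if i = 1 then E(1 := p * (E 1 + xL))
      else if i = N + 1 then E(N := p * (E N + xR))
      else E(i - 1 := p * (E (i - 1) + E i), i := (1 - p) * (E (i - 1) + E i)))"

text \<open>Probability space of the first ring: independent exponential clocks
  (clock j with rate R_j), p uniform on (0,1), X_L, X_R exponential with means TL, TR.\<close>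
definition first_ring_space :: "real \<Rightarrow> real \<Rightarrow> real \<Rightarrow> nat \<Rightarrow> (nat \<Rightarrow> real)
     \<Rightarrow> ((nat \<Rightarrow> real) \<times> real \<times> real \<times> real) measure" where
  "first_ring_space K TL TR N E =
     (PiM {1..N + 1} (\<lambda>j. density lborel (exponential_density (clock_rate K TL TR N E j))))
     \<Otimes>\<^sub>M (uniform_measure lborel {0<..<1}
     \<Otimes>\<^sub>M (density lborel (exponential_density (1 / TL))
     \<Otimes>\<^sub>M density lborel (exponential_density (1 / TR))))"

definition ring_first :: "nat \<Rightarrow> nat \<Rightarrow> (nat \<Rightarrow> real) set" where
  "ring_first N i = {t. \<forall>j \<in> {1..N + 1}. j \<noteq> i \<longrightarrow> t i < t j}"

text \<open>E_E [ f(E_(tau_1 +)) 1_(C_i(tau_1)) ] for nonnegative f.\<close>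
definition first_ring_exp :: "real \<Rightarrow> real \<Rightarrow> real \<Rightarrow> nat \<Rightarrow> (nat \<Rightarrow> real) \<Rightarrow> nat
     \<Rightarrow> ((nat \<Rightarrow> real) \<Rightarrow> ennreal) \<Rightarrow> ennreal" where
  "first_ring_exp K TL TR N E i f =
     (\<integral>\<^sup>+ \<omega>. indicator (ring_first N i) (fst \<omega>) *
         f (jump N E i (fst (snd \<omega>)) (fst (snd (snd \<omega>))) (snd (snd (snd \<omega>))))
       \<partial>first_ring_space K TL TR N E)"

definition a_coef :: "nat \<Rightarrow> nat \<Rightarrow> real" where
  "a_coef N m = 1 - (2 ^ (m - 1) - 1) / (2 ^ N - 1)"

definition V_fun :: "nat \<Rightarrow> real \<Rightarrow> nat \<Rightarrow> nat \<Rightarrow> (nat \<Rightarrow> real) \<Rightarrow> real" where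
  "V_fun N \<eta> n k E = (\<Sum>j < n. E (k + j)) powr (a_coef N n * \<eta> - 1)"

end

theory Submission
  imports Defs
begin

text \<open>Clock \<open>i\<close> rings first with probability \<open>R\<^sub>i / \<R>\<close>, independently of the fresh
  randomness \<open>p, X\<^sub>L, X\<^sub>R\<close>, so the expectation factors. Clocks \<open>k\<close> and \<open>k + n\<close> each involve an energy
  of the block \<open>E\<^sub>k, \<dots>, E\<^sub>k\<^sub>+\<^sub>n\<^sub>-\<^sub>1\<close>, hence \<open>R\<^sub>i \<le> \<surd>S\<close> for the block energy \<open>S\<close>. After the ring the
  block energy is at least \<open>q S\<close> with \<open>q \<in> {p, 1 - p}\<close>; since the exponent \<open>c = a\<^sub>n \<eta>\<close> satisfies
  \<open>c - 1 \<le> 0\<close>, this gives \<open>V\<^sub>n\<^sub>,\<^sub>k \<le> S\<^bsup>c-1\<^esup> (p\<^bsup>c-1\<^esup> + (1 - p)\<^bsup>c-1\<^esup>)\<close>, whose average over a uniform \<open>p\<close>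
  is \<open>2 S\<^bsup>c-1\<^esup> / c\<close>. Altogether the expectation is at most \<open>(2 / (a\<^sub>N \<eta>)) S\<^bsup>c-1/2\<^esup> / \<R>\<close>.\<close>

section \<open>Exponential clocks and uniform splitting\<close>

lemma nn_integral_pair_measure_mult:
  assumes "sigma_finite_measure M1" "sigma_finite_measure M2"
    and [measurable]: "f \<in> borel_measurable M1" "g \<in> borel_measurable M2"
  shows "(\<integral>\<^sup>+\<omega>. f (fst \<omega>) * g (snd \<omega>) \<partial>(M1 \<Otimes>\<^sub>M M2)) = (\<integral>\<^sup>+x. f x \<partial>M1) * (\<integral>\<^sup>+y. g y \<partial>M2)"
proof -
  interpret M2: sigma_finite_measure M2 by fact
  have "(\<integral>\<^sup>+\<omega>. f (fst \<omega>) * g (snd \<omega>) \<partial>(M1 \<Otimes>\<^sub>M M2)) = (\<integral>\<^sup>+x. \<integral>\<^sup>+y. f x * g y \<partial>M2 \<partial>M1)"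
    by (subst M2.nn_integral_fst[symmetric]) auto
  also have "\<dots> = (\<integral>\<^sup>+x. f x * (\<integral>\<^sup>+y. g y \<partial>M2) \<partial>M1)"
    by (simp add: nn_integral_cmult)
  also have "\<dots> = (\<integral>\<^sup>+x. f x \<partial>M1) * (\<integral>\<^sup>+y. g y \<partial>M2)"
    by (rule nn_integral_multc) simp
  finally show ?thesis .
qed

lemma emeasure_exponential_density_greaterThan:
  assumes l: "0 < l" and y: "0 \<le> y"
  shows "emeasure (density lborel (exponential_density l)) {y<..} = ennreal (exp (- y * l))"
proof -
  let ?M = "density lborel (exponential_density l)"
  interpret prob_space ?M using prob_space_exponential_density[OF l] .
  have "{y<..} = space ?M - {..y}" by auto
  hence "emeasure ?M {y<..} = emeasure ?M (space ?M) - emeasure ?M {..y}"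
    using emeasure_compl[of "{..y}" ?M] by simp
  also have "\<dots> = 1 - emeasure ?M {..y}"
    using emeasure_space_1 by simp
  also have "\<dots> = 1 - ennreal (1 - exp (- y * l))"
    using emeasure_erlang_density[OF l, of 0 y] y by (simp add: erlang_CDF_0 mult.commute)
  also have "\<dots> = ennreal (exp (- y * l))"
    using l y by (subst ennreal_1[symmetric], subst ennreal_minus) auto
  finally show ?thesis .
qed

lemma AE_exponential_density_nonneg:
  "AE x in density lborel (exponential_density l). 0 \<le> x"
  by (subst AE_density) (auto simp: exponential_density_def)

lemma nn_integral_exponential_density_top_outside:
  assumes "0 < l"
  shows "(\<integral>\<^sup>+x. (if 0 \<le> x then 1 else \<top>) \<partial>density lborel (exponential_density l)) = 1"
proof -
  interpret prob_space "density lborel (exponential_density l)"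
    using prob_space_exponential_density[OF assms] .
  have "(\<integral>\<^sup>+x. (if 0 \<le> x then 1 else \<top>) \<partial>density lborel (exponential_density l))
      = (\<integral>\<^sup>+x. 1 \<partial>density lborel (exponential_density l))"
    using AE_exponential_density_nonneg[of l]
    by (intro nn_integral_cong_AE) (auto elim!: eventually_mono)
  thus ?thesis using emeasure_space_1 by simp
qed

lemma indicator_first_eq_prod:
  fixes t :: "'i \<Rightarrow> 'a :: linorder"
  assumes "finite I"
  shows "indicator {t. \<forall>j\<in>I. j \<noteq> k \<longrightarrow> t k < t j} t = (\<Prod>j\<in>I - {k}. indicator {t k<..} (t j) :: ennreal)"
proof -
  have "(\<Prod>j\<in>J. indicator {t k<..} (t j) :: ennreal) = (if \<forall>j\<in>J. t k < t j then 1 else 0)"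
    if "finite J" for J
    using that by (induction J rule: finite_induct) auto
  thus ?thesis using assms by (auto simp: indicator_def)
qed

lemma borel_measurable_indicator_first:
  assumes fin: "finite I" and k: "k \<in> I" and sM: "\<And>j. j \<in> I \<Longrightarrow> sets (M j) = sets borel"
  shows "(indicator {t. \<forall>j\<in>I. j \<noteq> k \<longrightarrow> t k < t j} :: _ \<Rightarrow> ennreal)
           \<in> borel_measurable (PiM I (M :: 'i \<Rightarrow> real measure))"
proof -
  have comp[measurable]: "(\<lambda>t. t j) \<in> borel_measurable (PiM I M)" if "j \<in> I" for j
    using measurable_component_singleton[OF that, of M] sM[OF that]
    by (simp cong: measurable_cong_sets)
  show ?thesis
    unfolding indicator_first_eq_prod[OF fin, abs_def]
    by (intro borel_measurable_prod_ennreal) (use k in \<open>auto simp: indicator_def\<close>)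
qed

lemma nn_integral_PiM_indicator_first:
  fixes M :: "'i \<Rightarrow> real measure"
  assumes "product_sigma_finite M"
    and fin: "finite I" and k: "k \<in> I" and sets_M: "\<And>j. sets (M j) = sets borel"
  shows "(\<integral>\<^sup>+t. indicator {t. \<forall>j\<in>I. j \<noteq> k \<longrightarrow> t k < t j} t \<partial>PiM I M)
    = (\<integral>\<^sup>+y. (\<Prod>j\<in>I - {k}. emeasure (M j) {y<..}) \<partial>M k)"
proof -
  interpret product_sigma_finite M by fact
  define J where "J = I - {k}"
  have IJ: "I = insert k J" "k \<notin> J" "finite J" using k fin by (auto simp: J_def)
  have meas: "(\<lambda>t. \<Prod>j\<in>J. indicator {t k<..} (t j) :: ennreal) \<in> borel_measurable (PiM (insert k J) M)"
    using borel_measurable_indicator_first[OF fin k, of M] sets_M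
    by (simp add: indicator_first_eq_prod[OF fin, abs_def] J_def insert_absorb[OF k])
  have upd: "(\<Prod>j\<in>J. indicator {(t(k := y)) k<..} ((t(k := y)) j)) = (\<Prod>j\<in>J. indicator {y<..} (t j))"
    for t :: "'i \<Rightarrow> real" and y
    using IJ(2) by (intro prod.cong refl) auto
  have "(\<integral>\<^sup>+t. indicator {t. \<forall>j\<in>I. j \<noteq> k \<longrightarrow> t k < t j} t \<partial>PiM I M)
      = (\<integral>\<^sup>+t. (\<Prod>j\<in>J. indicator {t k<..} (t j)) \<partial>PiM (insert k J) M)"
    by (simp add: indicator_first_eq_prod[OF fin] J_def insert_absorb[OF k])
  also have "\<dots> = (\<integral>\<^sup>+y. (\<integral>\<^sup>+t. (\<Prod>j\<in>J. indicator {y<..} (t j)) \<partial>PiM J M) \<partial>M k)"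
    using product_nn_integral_insert_rev[OF IJ(3,2) meas] by (simp only: upd)
  also have "\<dots> = (\<integral>\<^sup>+y. (\<Prod>j\<in>J. emeasure (M j) {y<..}) \<partial>M k)"
    by (intro nn_integral_cong, subst product_nn_integral_prod)
      (auto simp: IJ(3) measurable_cong_sets[OF sets_M refl] sets_M intro!: prod.cong)
  finally show ?thesis by (simp add: J_def)
qed

lemma nn_integral_PiM_exponential_first:
  fixes r :: "'i \<Rightarrow> real"
  assumes fin: "finite I" and k: "k \<in> I" and pos: "\<And>j. j \<in> I \<Longrightarrow> 0 < r j"
  shows "(\<integral>\<^sup>+t. indicator {t. \<forall>j\<in>I. j \<noteq> k \<longrightarrow> t k < t j} t
            \<partial>PiM I (\<lambda>j. density lborel (exponential_density (r j))))
         = ennreal (r k / (\<Sum>j\<in>I. r j))"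
proof -
  \<comment> \<open>The rates are extended beyond \<open>I\<close> only to make every factor a probability space.\<close>
  define M where "M j = density lborel (exponential_density (if j \<in> I then r j else 1))" for j
  have PiM_eq: "PiM I (\<lambda>j. density lborel (exponential_density (r j))) = PiM I M"
    by (rule PiM_cong) (auto simp: M_def)
  have M_k: "M k = density lborel (exponential_density (r k))"
    using k by (simp add: M_def)
  have "prob_space (M j)" for j
    unfolding M_def using pos by (intro prob_space_exponential_density) auto
  hence "product_sigma_finite M"
    unfolding product_sigma_finite_def by (blast intro: prob_space_imp_sigma_finite)
  define R where "R = (\<Sum>j\<in>I. r j)"
  define R' where "R' = (\<Sum>j\<in>I - {k}. r j)"
  have R: "R = r k + R'" unfolding R_def R'_def using fin k by (simp add: sum.remove)
  have "0 \<le> R'" unfolding R'_def using pos by (intro sum_nonneg) (auto intro: less_imp_le)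
  hence R_pos: "0 < R" using R pos[OF k] by simp
  have survival: "(\<Prod>j\<in>I - {k}. emeasure (M j) {y<..}) = ennreal (exp (- y * R'))" if "0 \<le> y" for y
  proof -
    have "(\<Prod>j\<in>I - {k}. emeasure (M j) {y<..}) = (\<Prod>j\<in>I - {k}. ennreal (exp (- y * r j)))"
      using that pos by (intro prod.cong refl) (auto simp: M_def emeasure_exponential_density_greaterThan)
    thus ?thesis
      using fin by (simp add: R'_def prod_ennreal exp_sum[symmetric] sum_distrib_left sum_negf)
  qed
  have "(\<integral>\<^sup>+t. indicator {t. \<forall>j\<in>I. j \<noteq> k \<longrightarrow> t k < t j} t \<partial>PiM I M)
      = (\<integral>\<^sup>+y. (\<Prod>j\<in>I - {k}. emeasure (M j) {y<..}) \<partial>M k)"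
    by (rule nn_integral_PiM_indicator_first[OF \<open>product_sigma_finite M\<close> fin k]) (simp add: M_def)
  also have "\<dots> = (\<integral>\<^sup>+y. ennreal (exp (- y * R')) \<partial>M k)"
    using AE_exponential_density_nonneg[of "r k", folded M_k]
    by (intro nn_integral_cong_AE) (erule eventually_mono, simp add: survival)
  also have "\<dots> = (\<integral>\<^sup>+y. ennreal (exponential_density (r k) y) * ennreal (exp (- y * R')) \<partial>lborel)"
    unfolding M_k by (rule nn_integral_density) auto
  also have "\<dots> = (\<integral>\<^sup>+y. ennreal (r k / R) * ennreal (exponential_density R y) \<partial>lborel)"
  proof (rule nn_integral_cong)
    fix y :: real
    have "exp (- y * r k) * exp (- y * R') = exp (- y * R)"
      by (simp add: R mult_exp_exp algebra_simps)
    hence "r k * exp (- y * r k) * exp (- y * R') = r k / R * (R * exp (- y * R))"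
      using R_pos by (simp add: mult.assoc)
    thus "ennreal (exponential_density (r k) y) * ennreal (exp (- y * R'))
        = ennreal (r k / R) * ennreal (exponential_density R y)"
      using pos[OF k] R_pos by (simp add: exponential_density_def ennreal_mult[symmetric])
  qed
  also have "\<dots> = ennreal (r k / R)"
    using prob_space.emeasure_space_1[OF prob_space_exponential_density[OF R_pos]]
    by (simp add: nn_integral_cmult emeasure_density)
  finally show ?thesis using PiM_eq by (simp add: R_def)
qed

lemma has_integral_powr_Ioo_Beta:
  fixes c :: real
  assumes "0 < c"
  shows "((\<lambda>p. p powr (c - 1)) has_integral Beta c 1) {0<..<1}"
    and "((\<lambda>p. (1 - p) powr (c - 1)) has_integral Beta 1 c) {0<..<1}"
  using has_integral_Beta_real[of c 1] has_integral_Beta_real[of 1 c] assms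
  by (auto simp: has_integral_Icc_iff_Ioo elim!: has_integral_eq[rotated])

lemma Beta_real_right_1:
  fixes c :: real
  assumes "0 < c"
  shows "Beta c 1 = 1 / c"
proof -
  have "((\<lambda>p. p powr (c - 1)) has_integral 1 / c) {0<..<1}"
    using has_integral_powr_from_0[of "c - 1" 1] assms by (simp add: has_integral_Icc_iff_Ioo)
  with has_integral_powr_Ioo_Beta(1)[OF assms] show ?thesis
    by (rule has_integral_unique)
qed

lemma nn_integral_uniform_powr_reflect:
  fixes B c :: real
  assumes B: "0 \<le> B" and c: "0 < c"
  shows "(\<integral>\<^sup>+p. ennreal (B * (p powr (c - 1) + (1 - p) powr (c - 1))) \<partial>uniform_measure lborel {0<..<1})
           = ennreal (B * (2 / c))"
proof -
  let ?f = "\<lambda>p. B * (p powr (c - 1) + (1 - p) powr (c - 1))"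
  have "(?f has_integral B * (2 / c)) {0<..<1}"
    using has_integral_mult_right[OF has_integral_add[OF has_integral_powr_Ioo_Beta[OF c]], of B]
    by (simp add: Beta_commute[of 1 c] Beta_real_right_1[OF c])
  hence "((\<lambda>p. if p \<in> {0<..<1} then ?f p else 0) has_integral B * (2 / c)) UNIV"
    by (simp only: has_integral_restrict_UNIV)
  hence "(\<integral>\<^sup>+p. ennreal (if p \<in> {0<..<1} then ?f p else 0) \<partial>lborel) = ennreal (B * (2 / c))"
    by (rule nn_integral_has_integral_lborel[rotated 2]) (use B in auto)
  thus ?thesis
    by (simp add: nn_integral_uniform_measure indicator_def of_bool_def if_distrib divide_ennreal_def cong: if_cong)
qed

section \<open>The first ring of the energy exchange model\<close>

lemma ext_cfg_pos:
  assumes "0 < TL" "0 < TR" "\<forall>j\<in>{1..N}. 0 < E j" "m \<le> N + 1"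
  shows "0 < ext_cfg TL TR N E m"
  using assms by (auto simp: ext_cfg_def)

lemma clock_rate_pos:
  assumes "0 < K" "0 < TL" "0 < TR" "\<forall>j\<in>{1..N}. 0 < E j" "i \<le> N + 1"
  shows "0 < clock_rate K TL TR N E i"
  using assms ext_cfg_pos[of TL TR N E "i - 1"] ext_cfg_pos[of TL TR N E i]
  by (simp add: clock_rate_def rate_fun_def)

lemma clock_rate_le_sqrt:
  "clock_rate K TL TR N E i \<le> sqrt (ext_cfg TL TR N E (i - 1))"
  "clock_rate K TL TR N E i \<le> sqrt (ext_cfg TL TR N E i)"
  by (simp_all add: clock_rate_def rate_fun_def min_le_iff_disj)

lemma clock_rate_block_end_le_sqrt:
  assumes E: "\<forall>j\<in>{1..N}. 0 < E j" and n: "1 \<le> n" and k: "1 \<le> k" "k + n \<le> N + 1"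
    and i: "i = k \<or> i = k + n"
  shows "clock_rate K TL TR N E i \<le> sqrt (\<Sum>j<n. E (k + j))"
proof -
  obtain j where j: "j < n" and le: "clock_rate K TL TR N E i \<le> sqrt (E (k + j))"
  proof (cases "i = k")
    case True
    have "ext_cfg TL TR N E k = E (k + 0)" using k n by (simp add: ext_cfg_def)
    with True clock_rate_le_sqrt(2)[of K TL TR N E i] n show ?thesis
      by (intro that[of 0]) auto
  next
    case False
    have "ext_cfg TL TR N E (k + n - 1) = E (k + (n - 1))" using k n by (auto simp: ext_cfg_def)
    with False i clock_rate_le_sqrt(1)[of K TL TR N E i] n show ?thesis
      by (intro that[of "n - 1"]) auto
  qed
  have "E (k + j) \<le> (\<Sum>j<n. E (k + j))"
    using E j k by (intro member_le_sum[where f = "\<lambda>j. E (k + j)"]) (auto intro: less_imp_le)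
  with le show ?thesis
    by (meson order_trans real_sqrt_le_iff)
qed

lemma nn_integral_first_ring_space_product:
  fixes \<phi> \<psi>L \<psi>R :: "real \<Rightarrow> ennreal"
  assumes K: "0 < K" and TL: "0 < TL" and TR: "0 < TR" and E: "\<forall>j\<in>{1..N}. 0 < E j"
    and i: "i \<in> {1..N + 1}"
    and [measurable]: "\<phi> \<in> borel_measurable borel" "\<psi>L \<in> borel_measurable borel" "\<psi>R \<in> borel_measurable borel"
  shows "(\<integral>\<^sup>+\<omega>. indicator (ring_first N i) (fst \<omega>)
              * (\<phi> (fst (snd \<omega>)) * (\<psi>L (fst (snd (snd \<omega>))) * \<psi>R (snd (snd (snd \<omega>)))))
           \<partial>first_ring_space K TL TR N E)
    = ennreal (clock_rate K TL TR N E i / total_rate K TL TR N E)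
      * ((\<integral>\<^sup>+p. \<phi> p \<partial>uniform_measure lborel {0<..<1})
        * ((\<integral>\<^sup>+x. \<psi>L x \<partial>density lborel (exponential_density (1 / TL)))
          * (\<integral>\<^sup>+x. \<psi>R x \<partial>density lborel (exponential_density (1 / TR)))))"
proof -
  define r where "r = clock_rate K TL TR N E"
  have r_pos: "0 < r j" if "j \<in> {1..N + 1}" for j
    unfolding r_def using that by (intro clock_rate_pos[OF K TL TR E]) auto
  define MP where "MP = PiM {1..N + 1} (\<lambda>j. density lborel (exponential_density (r j)))"
  define U where "U = uniform_measure lborel {0<..<1::real}"
  define XL where "XL = density lborel (exponential_density (1 / TL))"
  define XR where "XR = density lborel (exponential_density (1 / TR))"
  have prob: "prob_space MP" "prob_space U" "prob_space XL" "prob_space XR"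
    unfolding MP_def U_def XL_def XR_def using r_pos TL TR
    by (auto intro!: prob_space_PiM prob_space_exponential_density prob_space_uniform_measure)
  have sigma_finite: "sigma_finite_measure MP" "sigma_finite_measure U"
      "sigma_finite_measure XL" "sigma_finite_measure XR"
      "sigma_finite_measure (XL \<Otimes>\<^sub>M XR)" "sigma_finite_measure (U \<Otimes>\<^sub>M (XL \<Otimes>\<^sub>M XR))"
    by (auto intro!: prob_space_imp_sigma_finite prob_space_pair prob)
  have [measurable]: "(indicator (ring_first N i) :: _ \<Rightarrow> ennreal) \<in> borel_measurable MP"
    unfolding MP_def ring_first_def using i by (intro borel_measurable_indicator_first) auto
  have [measurable]: "\<phi> \<in> borel_measurable U" "\<psi>L \<in> borel_measurable XL" "\<psi>R \<in> borel_measurable XR"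
    unfolding U_def XL_def XR_def by measurable
  have "(\<integral>\<^sup>+w. \<phi> (fst w) * (\<psi>L (fst (snd w)) * \<psi>R (snd (snd w))) \<partial>(U \<Otimes>\<^sub>M (XL \<Otimes>\<^sub>M XR)))
      = (\<integral>\<^sup>+p. \<phi> p \<partial>U) * ((\<integral>\<^sup>+x. \<psi>L x \<partial>XL) * (\<integral>\<^sup>+x. \<psi>R x \<partial>XR))"
    by (subst nn_integral_pair_measure_mult; simp add: sigma_finite nn_integral_pair_measure_mult)
  moreover have "(\<integral>\<^sup>+t. indicator (ring_first N i) t \<partial>MP) = ennreal (r i / (\<Sum>j\<in>{1..N + 1}. r j))"
    unfolding MP_def ring_first_def using i r_pos by (intro nn_integral_PiM_exponential_first) auto
  ultimately show ?thesis
    unfolding first_ring_space_def MP_def[symmetric] U_def[symmetric] XL_def[symmetric] XR_def[symmetric]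
      r_def[symmetric]
    by (subst nn_integral_pair_measure_mult[where g = "\<lambda>w. \<phi> (fst w) * (\<psi>L (fst (snd w)) * \<psi>R (snd (snd w)))"])
      (auto simp: sigma_finite r_def total_rate_def)
qed

lemma first_ring_exp_le:
  fixes f :: "(nat \<Rightarrow> real) \<Rightarrow> ennreal" and h :: "real \<Rightarrow> ennreal"
  assumes K: "0 < K" and TL: "0 < TL" and TR: "0 < TR" and E: "\<forall>j\<in>{1..N}. 0 < E j"
    and i: "i \<in> {1..N + 1}" and h[measurable]: "h \<in> borel_measurable borel"
    and h_pos: "\<And>p. 0 < p \<Longrightarrow> p < 1 \<Longrightarrow> 0 < h p"
    and f_le: "\<And>p xL xR. 0 < p \<Longrightarrow> p < 1 \<Longrightarrow> 0 \<le> xL \<Longrightarrow> 0 \<le> xR \<Longrightarrow> f (jump N E i p xL xR) \<le> h p"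
  shows "first_ring_exp K TL TR N E i f
    \<le> ennreal (clock_rate K TL TR N E i / total_rate K TL TR N E)
        * (\<integral>\<^sup>+p. h p \<partial>uniform_measure lborel {0<..<1})"
proof -
  \<comment> \<open>On the null set where \<open>p \<notin> (0, 1)\<close> or \<open>X\<^sub>L < 0\<close> or \<open>X\<^sub>R < 0\<close> the majorant is \<open>\<top>\<close>; so it
    is a product of one-variable functions, and no measurability of \<open>f\<close> is needed.\<close>
  define hp where "hp p = (if p \<in> {0<..<1} then h p else \<top>)" for p :: real
  define hx where "hx x = (if 0 \<le> x then 1 else \<top> :: ennreal)" for x :: real
  have hp_measurable: "hp \<in> borel_measurable borel"
    unfolding hp_def by measurable
  have "first_ring_exp K TL TR N E i f
      \<le> (\<integral>\<^sup>+\<omega>. indicator (ring_first N i) (fst \<omega>)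
              * (hp (fst (snd \<omega>)) * (hx (fst (snd (snd \<omega>))) * hx (snd (snd (snd \<omega>)))))
           \<partial>first_ring_space K TL TR N E)"
    unfolding first_ring_exp_def
  proof (intro nn_integral_mono mult_left_mono)
    fix \<omega> :: "(nat \<Rightarrow> real) \<times> real \<times> real \<times> real"
    obtain t p xL xR where \<omega>: "\<omega> = (t, p, xL, xR)" by (cases \<omega>) auto
    show "f (jump N E i (fst (snd \<omega>)) (fst (snd (snd \<omega>))) (snd (snd (snd \<omega>))))
        \<le> hp (fst (snd \<omega>)) * (hx (fst (snd (snd \<omega>))) * hx (snd (snd (snd \<omega>))))"
      using f_le[of p xL xR] h_pos[of p]
      by (cases "0 < p \<and> p < 1 \<and> 0 \<le> xL \<and> 0 \<le> xR") (auto simp: \<omega> hp_def hx_def ennreal_mult_eq_top_iff)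
  qed simp
  also have "\<dots> = ennreal (clock_rate K TL TR N E i / total_rate K TL TR N E)
        * (\<integral>\<^sup>+p. hp p \<partial>uniform_measure lborel {0<..<1})"
    using TL TR unfolding hx_def
    by (subst nn_integral_first_ring_space_product[OF K TL TR E i hp_measurable])
      (auto simp: hp_def nn_integral_exponential_density_top_outside)
  also have "(\<integral>\<^sup>+p. hp p \<partial>uniform_measure lborel {0<..<1}) = (\<integral>\<^sup>+p. h p \<partial>uniform_measure lborel {0<..<1})"
    unfolding hp_def by (intro nn_integral_cong_AE AE_uniform_measureI) auto
  finally show ?thesis .
qed

lemma jump_ge_p:
  assumes p: "0 \<le> p" "p \<le> 1" and x: "0 \<le> xL" "0 \<le> xR" and E: "\<forall>j\<in>{1..N}. 0 \<le> E j"
    and m: "m \<in> {1..N}" and i: "i = 1 \<or> m \<noteq> i"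
  shows "p * E m \<le> jump N E i p xL xR m"
proof -
  have Em: "p * E m \<le> E m" using E m p by (simp add: mult_left_le_one_le)
  have "p * E m \<le> p * (E m + z)" if "0 \<le> z" for z using p that by (simp add: mult_left_mono)
  moreover have "0 \<le> E i" if "m = i - 1" "i \<noteq> 1" "i \<noteq> N + 1" using that m by (intro E[rule_format]) auto
  ultimately show ?thesis
    using assms Em by (auto simp: jump_def)
qed

lemma jump_ge_one_minus_p:
  assumes p: "0 \<le> p" "p \<le> 1" and E: "\<forall>j\<in>{1..N}. 0 \<le> E j"
    and m: "m \<le> N" and i: "2 \<le> i" "i \<le> m"
  shows "(1 - p) * E m \<le> jump N E i p xL xR m"
proof -
  have Em: "(1 - p) * E m \<le> E m" using E m i p by (simp add: mult_left_le_one_le)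
  have "0 \<le> E (m - 1)" using m i by (intro E[rule_format]) auto
  hence "(1 - p) * E m \<le> (1 - p) * (E (m - 1) + E m)" using p by (simp add: mult_left_mono)
  thus ?thesis
    using assms Em by (auto simp: jump_def)
qed

lemma block_sum_jump_ge:
  assumes p: "0 < p" "p < 1" and x: "0 \<le> xL" "0 \<le> xR" and E: "\<forall>j\<in>{1..N}. 0 \<le> E j"
    and k: "1 \<le> k" "k + n \<le> N + 1" and i: "i = k \<or> i = k + n"
  shows "\<exists>q\<in>{p, 1 - p}. q * (\<Sum>j<n. E (k + j)) \<le> (\<Sum>j<n. jump N E i p xL xR (k + j))"
  \<comment> \<open>Only an interior clock \<open>k \<ge> 2\<close> gives the block the share \<open>1 - p\<close>; otherwise it is \<open>p\<close>.\<close>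
proof (cases "i = k + n \<or> k = 1")
  case True
  have "p * (\<Sum>j<n. E (k + j)) \<le> (\<Sum>j<n. jump N E i p xL xR (k + j))"
    unfolding sum_distrib_left using True i k
    by (intro sum_mono jump_ge_p[OF _ _ x E]) (use p in auto)
  thus ?thesis by blast
next
  case False
  have "(1 - p) * (\<Sum>j<n. E (k + j)) \<le> (\<Sum>j<n. jump N E i p xL xR (k + j))"
    unfolding sum_distrib_left using False i k
    by (intro sum_mono jump_ge_one_minus_p[OF _ _ E]) (use p in auto)
  thus ?thesis by blast
qed

lemma V_fun_jump_le:
  assumes p: "0 < p" "p < 1" and x: "0 \<le> xL" "0 \<le> xR" and E: "\<forall>j\<in>{1..N}. 0 < E j"
    and n: "1 \<le> n" and k: "1 \<le> k" "k + n \<le> N + 1" and i: "i = k \<or> i = k + n"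
    and c: "a_coef N n * \<eta> \<le> 1"
  shows "V_fun N \<eta> n k (jump N E i p xL xR)
    \<le> (\<Sum>j<n. E (k + j)) powr (a_coef N n * \<eta> - 1)
        * (p powr (a_coef N n * \<eta> - 1) + (1 - p) powr (a_coef N n * \<eta> - 1))"
proof -
  define e where "e = a_coef N n * \<eta> - 1"
  define S where "S = (\<Sum>j<n. E (k + j))"
  obtain q where q: "q \<in> {p, 1 - p}" and qS: "q * S \<le> (\<Sum>j<n. jump N E i p xL xR (k + j))"
    using block_sum_jump_ge[OF p x _ k i] E unfolding S_def by (auto intro: less_imp_le)
  have "0 < S" unfolding S_def using E n k
    by (intro sum_pos2[of _ 0]) (auto intro!: less_imp_le)
  moreover have "0 < q" using q p by auto
  ultimately have "V_fun N \<eta> n k (jump N E i p xL xR) \<le> (q * S) powr e"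
    unfolding V_fun_def e_def using qS c by (intro powr_mono2') auto
  also have "\<dots> = S powr e * q powr e" by (simp add: powr_mult)
  also have "\<dots> \<le> S powr e * (p powr e + (1 - p) powr e)"
    using q by (intro mult_left_mono) auto
  finally show ?thesis by (simp add: S_def e_def)
qed

lemma a_coef_pos: "1 \<le> N \<Longrightarrow> 0 < a_coef N N"
proof -
  assume "1 \<le> N"
  hence "(2::real) ^ (N - 1) < 2 ^ N" by (intro power_strict_increasing) auto
  thus ?thesis by (simp add: a_coef_def)
qed

lemma a_coef_le_1: "a_coef N n \<le> 1"
  by (simp add: a_coef_def)

lemma a_coef_antimono: "n \<le> N \<Longrightarrow> a_coef N N \<le> a_coef N n"
proof -
  assume "n \<le> N"
  hence "(2::real) ^ (n - 1) \<le> 2 ^ (N - 1)" by (intro power_increasing) auto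
  thus ?thesis by (simp add: a_coef_def divide_right_mono)
qed

lemma first_ring_exp_V_fun_le:
  fixes \<eta> :: real
  assumes K: "0 < K" and TL: "0 < TL" and TR: "0 < TR" and E: "\<forall>j\<in>{1..N}. 0 < E j"
    and n: "1 \<le> n" and k: "1 \<le> k" "k + n \<le> N + 1" and i: "i = k \<or> i = k + n"
  defines "c \<equiv> a_coef N n * \<eta>" and "S \<equiv> \<Sum>j<n. E (k + j)"
  assumes c: "0 < c" "c \<le> 1" and C: "2 / c \<le> C"
  shows "first_ring_exp K TL TR N E i (\<lambda>E'. ennreal (V_fun N \<eta> n k E'))
    \<le> ennreal (C / total_rate K TL TR N E * S powr (c - 1 / 2))"
proof -
  define r where "r = clock_rate K TL TR N E i"
  define R where "R = total_rate K TL TR N E"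
  have "0 < S" unfolding S_def using E n k
    by (intro sum_pos2[of _ 0]) (auto intro!: less_imp_le)
  have r: "0 < r" "r \<le> S powr (1 / 2)"
    using clock_rate_pos[OF K TL TR E, of i] clock_rate_block_end_le_sqrt[OF E n k i] i k \<open>0 < S\<close>
    by (auto simp: r_def S_def powr_half_sqrt)
  have "0 < R"
    unfolding R_def total_rate_def using clock_rate_pos[OF K TL TR E]
    by (intro sum_pos) auto
  have "r / R * (S powr (c - 1) * (2 / c)) \<le> C / R * S powr (c - 1 / 2)"
  proof -
    have "r * (S powr (c - 1) * (2 / c)) \<le> S powr (1 / 2) * (S powr (c - 1) * C)"
      using r C c by (intro mult_mono) auto
    also have "\<dots> = C * S powr (c - 1 / 2)"
      by (simp add: powr_add[symmetric])
    finally show ?thesis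
      unfolding times_divide_eq_left using \<open>0 < R\<close> by (intro divide_right_mono) simp_all
  qed
  have "first_ring_exp K TL TR N E i (\<lambda>E'. ennreal (V_fun N \<eta> n k E'))
      \<le> ennreal (r / R)
        * (\<integral>\<^sup>+p. ennreal (S powr (c - 1) * (p powr (c - 1) + (1 - p) powr (c - 1)))
             \<partial>uniform_measure lborel {0<..<1})"
    unfolding r_def R_def
  proof (rule first_ring_exp_le[OF K TL TR E])
    fix p xL xR :: real
    assume "0 < p" "p < 1" "0 \<le> xL" "0 \<le> xR"
    thus "ennreal (V_fun N \<eta> n k (jump N E i p xL xR))
        \<le> ennreal (S powr (c - 1) * (p powr (c - 1) + (1 - p) powr (c - 1)))"
      using V_fun_jump_le[OF _ _ _ _ E n k i, of p xL xR \<eta>] c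
      by (intro ennreal_leI) (simp add: c_def S_def)
  qed (use i k n \<open>0 < S\<close> in \<open>auto intro!: mult_pos_pos add_pos_pos\<close>)
  also have "\<dots> = ennreal (r / R * (S powr (c - 1) * (2 / c)))"
    using \<open>0 < R\<close> r c
    by (subst nn_integral_uniform_powr_reflect) (simp_all only: ennreal_mult' powr_ge_zero less_imp_le divide_nonneg_pos)
  also have "\<dots> \<le> ennreal (C / R * S powr (c - 1 / 2))"
    by (rule ennreal_leI) fact
  finally show ?thesis unfolding R_def .
qed

lemma first_ring_exp_V_fun_le_uniform:
  fixes \<eta> :: real
  assumes N: "1 \<le> N" and K: "0 < K" and TL: "0 < TL" and TR: "0 < TR" and \<eta>: "0 < \<eta>" "\<eta> \<le> 1"
    and E: "\<forall>j\<in>{1..N}. 0 < E j" and n: "1 \<le> n" "n \<le> N" and k: "1 \<le> k" "k + n \<le> N + 1"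
    and i: "i = k \<or> i = k + n"
  shows "first_ring_exp K TL TR N E i (\<lambda>E'. ennreal (V_fun N \<eta> n k E'))
    \<le> ennreal (2 / (a_coef N N * \<eta>) / total_rate K TL TR N E
                 * (\<Sum>j<n. E (k + j)) powr (a_coef N n * \<eta> - 1 / 2))"
proof (rule first_ring_exp_V_fun_le[OF K TL TR E n(1) k i])
  have "0 < a_coef N N * \<eta>" using a_coef_pos[OF N] \<eta> by simp
  moreover have "a_coef N N * \<eta> \<le> a_coef N n * \<eta>"
    using a_coef_antimono[OF n(2)] \<eta> by simp
  ultimately show "0 < a_coef N n * \<eta>" "2 / (a_coef N n * \<eta>) \<le> 2 / (a_coef N N * \<eta>)"
    by (auto intro: divide_left_mono)
  show "a_coef N n * \<eta> \<le> 1"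
    using a_coef_le_1[of N n] \<eta> by (auto intro: mult_le_one)
qed

theorem lemma4p2:
  fixes N :: nat and TL TR :: real
  assumes "N \<ge> 1" and "TL > 0" and "TR > 0"
  shows "\<exists>K0. \<forall>K \<ge> K0. \<exists>\<eta>0 > 0. \<forall>\<eta>. 0 < \<eta> \<and> \<eta> < \<eta>0 \<longrightarrow>
    (\<exists>C > 0. \<forall>E n k. (\<forall>i \<in> {1..N}. E i > 0) \<longrightarrow> 1 \<le> n \<longrightarrow> n \<le> N \<longrightarrow>
        1 \<le> k \<longrightarrow> k \<le> N - n + 1 \<longrightarrow>
       first_ring_exp K TL TR N E k (\<lambda>E'. ennreal (V_fun N \<eta> n k E'))
         \<le> ennreal (C / total_rate K TL TR N E * (\<Sum>i < n. E (k + i)) powr (a_coef N n * \<eta> - 1 / 2))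
     \<and> first_ring_exp K TL TR N E (k + n) (\<lambda>E'. ennreal (V_fun N \<eta> n k E'))
         \<le> ennreal (C / total_rate K TL TR N E * (\<Sum>i < n. E (k + i)) powr (a_coef N n * \<eta> - 1 / 2)))"
proof (rule exI[of _ 1], intro allI impI, rule exI[of _ 1], intro conjI zero_less_one allI impI, elim conjE)
  fix K \<eta> :: real
  assume "1 \<le> K" "0 < \<eta>" "\<eta> < 1"
  thus "\<exists>C > 0. \<forall>E n k. (\<forall>i \<in> {1..N}. E i > 0) \<longrightarrow> 1 \<le> n \<longrightarrow> n \<le> N \<longrightarrow>
        1 \<le> k \<longrightarrow> k \<le> N - n + 1 \<longrightarrow>
       first_ring_exp K TL TR N E k (\<lambda>E'. ennreal (V_fun N \<eta> n k E'))
         \<le> ennreal (C / total_rate K TL TR N E * (\<Sum>i < n. E (k + i)) powr (a_coef N n * \<eta> - 1 / 2))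
     \<and> first_ring_exp K TL TR N E (k + n) (\<lambda>E'. ennreal (V_fun N \<eta> n k E'))
         \<le> ennreal (C / total_rate K TL TR N E * (\<Sum>i < n. E (k + i)) powr (a_coef N n * \<eta> - 1 / 2))"
    using a_coef_pos[OF assms(1)] assms
    by (intro exI[of _ "2 / (a_coef N N * \<eta>)"] conjI allI impI first_ring_exp_V_fun_le_uniform) auto
qed

end
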